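(* For a $(w,d)$ sliding-window erasure channel with topological entropy $h_{ch}$, the zero-error capacity satisfies $1-\frac{d}{w}-h_{ch}\le C_0\le 1-\frac{d}{w}$.
   Context: Logarithms are to base $q=|\mathcal{X}|\ge2$, $\mathcal{X}$ the input alphabet. Integers $w\ge1$, $0\le d\le w$. The $(w,d)$ sliding-window erasure channel: a noise word $v(0:n-1)\in\{0,1\}^n$ is admissible if for some initial pattern $v(-w:-1)\in\{0,1\}^w$ every $w$ consecutive entries of $(v(-w),\dots,v(n-1))$ contain at most $d$ ones; output $y(t)=x(t)$ if $v(t)=0$ and $y(t)=*$ (a symbol not in $\mathcal{X}$) if $v(t)=1$. Its state graph has vertices the binary words of length $w$ with at most $d$ ones and an edge from $(b_1,\dots,b_w)$ to $(b_2,\dots,b_w,b)$ whenever the latter has at most $d$ ones; $h_{ch}=\log\lambda$ where $\lambda$ is the Perron eigenvalue of its $0/1$ adjacency matrix. A zero-error code of length $n$ is a set $\mathcal{F}\subseteq\mathcal{X}^n$ such that no output word can be produced by two distinct codewords under admissible noise; $C_0=\sup_n\sup_{\mathcal{F}}\log|\mathcal{F}|/n$. *)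

theory Defs
  imports Complex_Main "HOL-Library.Cardinality"
begin

definition ones :: "bool list \<Rightarrow> nat" where
  "ones b = length (filter id b)"

text \<open>Admissible noise words of the (w,d) sliding-window erasure channel: there is an
  initial pattern v(-w:-1) of length w such that every w consecutive entries of
  (v(-w),...,v(n-1)) contain at most d ones.\<close>
definition sw_admissible :: "nat \<Rightarrow> nat \<Rightarrow> bool list \<Rightarrow> bool" where
  "sw_admissible w d v \<longleftrightarrow>
     (\<exists>init. length init = w \<and>
        (\<forall>i \<le> length v. ones (take w (drop i (init @ v))) \<le> d))"

text \<open>Channel output: None plays the role of the erasure symbol *.\<close>
definition sw_output :: "'a list \<Rightarrow> bool list \<Rightarrow> 'a option list" where
  "sw_output x v = map (\<lambda>(a, e). if e then None else Some a) (zip x v)"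

definition zero_error_code :: "nat \<Rightarrow> nat \<Rightarrow> nat \<Rightarrow> 'a list set \<Rightarrow> bool" where
  "zero_error_code w d n F \<longleftrightarrow>
     (\<forall>x\<in>F. length x = n) \<and>
     (\<forall>x\<in>F. \<forall>x'\<in>F. \<forall>v v'. x \<noteq> x' \<longrightarrow> length v = n \<longrightarrow> length v' = n \<longrightarrow>
        sw_admissible w d v \<longrightarrow> sw_admissible w d v' \<longrightarrow>
        sw_output x v \<noteq> sw_output x' v')"

definition zero_error_capacity :: "nat \<Rightarrow> nat \<Rightarrow> 'a::finite itself \<Rightarrow> real" where
  "zero_error_capacity w d _ =
     Sup {log (real CARD('a)) (real (card F)) / real n | n F.
            n \<ge> 1 \<and> F \<noteq> {} \<and> zero_error_code w d n (F :: 'a list set)}"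

definition sw_states :: "nat \<Rightarrow> nat \<Rightarrow> bool list set" where
  "sw_states w d = {b. length b = w \<and> ones b \<le> d}"

definition sw_adj :: "nat \<Rightarrow> nat \<Rightarrow> bool list \<Rightarrow> bool list \<Rightarrow> real" where
  "sw_adj w d b b' =
     (if b \<in> sw_states w d \<and> b' \<in> sw_states w d \<and> (\<exists>c. b' = tl b @ [c]) then 1 else 0)"

definition is_eigenvalue :: "('s \<Rightarrow> 's \<Rightarrow> real) \<Rightarrow> 's set \<Rightarrow> complex \<Rightarrow> bool" where
  "is_eigenvalue A S \<mu> \<longleftrightarrow>
     (\<exists>u :: 's \<Rightarrow> complex. (\<exists>s\<in>S. u s \<noteq> 0) \<and>
        (\<forall>s\<in>S. (\<Sum>t\<in>S. complex_of_real (A s t) * u t) = \<mu> * u s))"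

text \<open>Perron eigenvalue of a nonnegative matrix = its spectral radius
  (largest modulus of an eigenvalue; by Perron--Frobenius it is itself an eigenvalue).\<close>
definition perron_eigenvalue :: "('s \<Rightarrow> 's \<Rightarrow> real) \<Rightarrow> 's set \<Rightarrow> real" where
  "perron_eigenvalue A S = Max {cmod \<mu> | \<mu>. is_eigenvalue A S \<mu>}"

definition h_ch :: "real \<Rightarrow> nat \<Rightarrow> nat \<Rightarrow> real" where
  "h_ch q w d = log q (perron_eigenvalue (sw_adj w d) (sw_states w d))"

end

theory Submission
  imports Defs "Jordan_Normal_Form.Spectral_Radius" "HOL-Real_Asymp.Real_Asymp"
begin

text \<open>Upper bound: the noise word that erases the first d symbols of every block of w is
  admissible, so distinct codewords must differ outside its at least dn/w erasures, whence
  |F| \<le> q^(n - dn/w).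
  Lower bound: two words are confusable iff they agree outside the erasures of some admissible
  noise word. An admissible word has at most d(n/w + 1) ones, so every word is confusable with
  at most |Adm_n| q^(d(n/w + 1)) words, and a maximal family of pairwise non-confusable words is
  a code with at least q^n / (|Adm_n| q^(d(n/w + 1))) words. Admissible noise words are walks in
  the state graph, so |Adm_n| is a sum of entries of A^n; the Jordan normal form of A/\<lambda>,
  whose spectral radius is at most 1, bounds it by a polynomial times \<lambda>^n, and the polynomial
  factor disappears from the rate as n \<rightarrow> \<infinity>.\<close>

section \<open>Eigenvalues and growth of linear recurrences\<close>

definition scaled_mat :: "('s \<Rightarrow> 's \<Rightarrow> real) \<Rightarrow> (nat \<Rightarrow> 's) \<Rightarrow> nat \<Rightarrow> real \<Rightarrow> complex mat" where
  "scaled_mat A f N r = mat N N (\<lambda>(i, j). complex_of_real (A (f i) (f j) / r))"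

lemma dim_scaled_mat [simp]:
  "dim_row (scaled_mat A f N r) = N" "dim_col (scaled_mat A f N r) = N"
  unfolding scaled_mat_def by simp_all

lemma scaled_mat_carrier [simp]: "scaled_mat A f N r \<in> carrier_mat N N"
  by (rule carrier_matI) simp_all

lemma scaled_mat_mult_vec:
  assumes f: "bij_betw f {0..<N} S" and i: "i < N"
  shows "(scaled_mat A f N r *\<^sub>v vec N (u \<circ> f)) $ i
           = (\<Sum>t\<in>S. complex_of_real (A (f i) t) * u t) / complex_of_real r"
proof -
  have "(scaled_mat A f N r *\<^sub>v vec N (u \<circ> f)) $ i
          = (\<Sum>j\<in>{0..<N}. complex_of_real (A (f i) (f j)) * u (f j)) / complex_of_real r"
    using i unfolding scaled_mat_def by (simp add: scalar_prod_def sum_divide_distrib)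
  also have "(\<Sum>j\<in>{0..<N}. complex_of_real (A (f i) (f j)) * u (f j))
               = (\<Sum>t\<in>S. complex_of_real (A (f i) t) * u t)"
    using sum.reindex_bij_betw[OF f, of "\<lambda>t. complex_of_real (A (f i) t) * u t"] by simp
  finally show ?thesis .
qed

lemma is_eigenvalue_if_eigenvector_scaled_mat:
  assumes f: "bij_betw f {0..<N} S" and r: "r > 0"
    and ev: "eigenvector (scaled_mat A f N r) v \<mu>"
  shows "is_eigenvalue A S (complex_of_real r * \<mu>)"
proof -
  define u where "u = (\<lambda>s. v $ the_inv_into {0..<N} f s)"
  have v: "v \<in> carrier_vec N" "v \<noteq> 0\<^sub>v N" "scaled_mat A f N r *\<^sub>v v = \<mu> \<cdot>\<^sub>v v"
    using ev unfolding eigenvector_def by auto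
  have v_eq: "v = vec N (u \<circ> f)"
  proof (rule eq_vecI)
    fix i assume "i < dim_vec (vec N (u \<circ> f))"
    then show "v $ i = vec N (u \<circ> f) $ i"
      using f by (simp add: u_def bij_betw_def the_inv_into_f_f)
  qed (use v(1) in simp)
  obtain i where i: "i < N" "v $ i \<noteq> 0"
    using v(1,2) by (metis carrier_vecD eq_vecI index_zero_vec(1,2))
  have "(\<Sum>t\<in>S. complex_of_real (A s t) * u t) = complex_of_real r * \<mu> * u s" if s: "s \<in> S" for s
  proof -
    obtain j where j: "j < N" "s = f j"
      using s bij_betw_imp_surj_on[OF f] by (metis atLeastLessThan_iff imageE)
    have "(\<Sum>t\<in>S. complex_of_real (A s t) * u t) / complex_of_real r
            = (scaled_mat A f N r *\<^sub>v vec N (u \<circ> f)) $ j"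
      unfolding j(2) by (rule scaled_mat_mult_vec[OF f j(1), symmetric])
    also have "\<dots> = \<mu> * u s"
      using v(3) v_eq j by simp
    finally show ?thesis
      using r by (simp add: field_simps)
  qed
  moreover have "u (f i) \<noteq> 0" "f i \<in> S"
    using i v_eq f by (auto simp: bij_betw_def)
  ultimately show ?thesis
    unfolding is_eigenvalue_def by blast
qed

lemma eigenvalue_scaled_mat_if_is_eigenvalue:
  assumes f: "bij_betw f {0..<N} S" and r: "r > 0" and ev: "is_eigenvalue A S \<mu>"
  shows "eigenvalue (scaled_mat A f N r) (\<mu> / complex_of_real r)"
proof -
  obtain u where u: "\<exists>s\<in>S. u s \<noteq> 0"
    "\<And>s. s \<in> S \<Longrightarrow> (\<Sum>t\<in>S. complex_of_real (A s t) * u t) = \<mu> * u s"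
    using ev unfolding is_eigenvalue_def by blast
  have "vec N (u \<circ> f) \<noteq> 0\<^sub>v N"
  proof
    assume "vec N (u \<circ> f) = 0\<^sub>v N"
    then have "u (f i) = 0" if "i < N" for i
      using that by (metis comp_apply index_vec index_zero_vec(1))
    with u(1) f show False
      by (force simp: bij_betw_def)
  qed
  moreover have "scaled_mat A f N r *\<^sub>v vec N (u \<circ> f) = (\<mu> / complex_of_real r) \<cdot>\<^sub>v vec N (u \<circ> f)"
  proof (rule eq_vecI)
    fix i assume "i < dim_vec ((\<mu> / complex_of_real r) \<cdot>\<^sub>v vec N (u \<circ> f))"
    then have i: "i < N" by simp
    then have "f i \<in> S"
      using f by (auto simp: bij_betw_def)
    then show "(scaled_mat A f N r *\<^sub>v vec N (u \<circ> f)) $ i = ((\<mu> / complex_of_real r) \<cdot>\<^sub>v vec N (u \<circ> f)) $ i"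
      using i by (simp add: scaled_mat_mult_vec[OF f i] u(2))
  qed simp
  ultimately show ?thesis
    unfolding eigenvalue_def eigenvector_def by (auto intro!: exI[of _ "vec N (u \<circ> f)"])
qed

lemma spectral_radius_scaled_mat_le_1:
  assumes f: "bij_betw f {0..<N} S" and N: "N > 0" and r: "r > 0"
    and eig: "\<And>\<mu>. is_eigenvalue A S \<mu> \<Longrightarrow> cmod \<mu> \<le> r"
  shows "spectral_radius (scaled_mat A f N r) \<le> 1"
proof -
  obtain \<mu> where \<mu>: "\<mu> \<in> spectrum (scaled_mat A f N r)"
    and radius: "spectral_radius (scaled_mat A f N r) = cmod \<mu>"
    using spectral_radius_mem_max(1)[OF scaled_mat_carrier[of A f N r] N] by auto
  then obtain v where "eigenvector (scaled_mat A f N r) v \<mu>"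
    unfolding spectrum_def eigenvalue_def by auto
  then have "r * cmod \<mu> \<le> r"
    using eig[OF is_eigenvalue_if_eigenvector_scaled_mat[OF f r]] r by (simp add: norm_mult)
  then show ?thesis
    using r radius by simp
qed

lemma finite_is_eigenvalue:
  assumes "finite S"
  shows "finite {\<mu>. is_eigenvalue A S \<mu>}"
proof -
  obtain f where f: "bij_betw f {0..<card S} S"
    using ex_bij_betw_nat_finite[OF assms] by blast
  have "{\<mu>. is_eigenvalue A S \<mu>} \<subseteq> spectrum (scaled_mat A f (card S) 1)"
    using eigenvalue_scaled_mat_if_is_eigenvalue[OF f, of 1 A] by (auto simp: spectrum_def)
  then show ?thesis
    using card_finite_spectrum(1)[OF scaled_mat_carrier] by (rule finite_subset)
qed

lemma ex_is_eigenvalue: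
  assumes "finite S" and "S \<noteq> {}"
  shows "\<exists>\<mu>. is_eigenvalue A S \<mu>"
proof -
  obtain f where f: "bij_betw f {0..<card S} S"
    using ex_bij_betw_nat_finite[OF assms(1)] by blast
  obtain \<mu> where "\<mu> \<in> spectrum (scaled_mat A f (card S) 1)"
    using spectrum_non_empty[OF scaled_mat_carrier[of A f "card S" 1]] assms
    by (auto simp: card_gt_0_iff)
  then obtain v where "eigenvector (scaled_mat A f (card S) 1) v \<mu>"
    unfolding spectrum_def eigenvalue_def by auto
  then show ?thesis
    using is_eigenvalue_if_eigenvector_scaled_mat[OF f, of 1] by auto
qed

lemma cmod_le_perron_eigenvalue:
  assumes "finite S" and "is_eigenvalue A S \<mu>"
  shows "cmod \<mu> \<le> perron_eigenvalue A S"
proof -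
  have "finite {cmod \<mu> | \<mu>. is_eigenvalue A S \<mu>}"
    using finite_is_eigenvalue[OF assms(1)] by (simp add: setcompr_eq_image)
  then show ?thesis
    unfolding perron_eigenvalue_def using assms(2) by (auto intro: Max_ge)
qed

lemma perron_eigenvalue_nonneg:
  assumes "finite S" and "S \<noteq> {}"
  shows "0 \<le> perron_eigenvalue A S"
  using ex_is_eigenvalue[OF assms] cmod_le_perron_eigenvalue[OF assms(1)] norm_ge_zero order_trans
  by metis

lemma pow_mat_commute:
  assumes "M \<in> carrier_mat n n"
  shows "M * M ^\<^sub>m k = M ^\<^sub>m k * M"
proof (induction k)
  case 0
  then show ?case using assms by simp
next
  case (Suc k)
  have "M * M ^\<^sub>m Suc k = (M * M ^\<^sub>m k) * M"
    using assoc_mult_mat[OF assms pow_carrier_mat[OF assms] assms] by simp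
  then show ?case using Suc by simp
qed

lemma pow_mat_mult_vec_poly_bound:
  fixes M :: "complex mat"
  assumes M: "M \<in> carrier_mat N N" and radius: "spectral_radius M \<le> 1" and x: "x \<in> carrier_vec N"
  shows "\<exists>C K. \<forall>k i. i < N \<longrightarrow> cmod ((M ^\<^sub>m k *\<^sub>v x) $ i) \<le> C * real (k + 1) ^ K"
proof -
  obtain c1 c2 where c: "\<And>k. norm_bound (M ^\<^sub>m k) (c1 + c2 * real k ^ (N - 1))"
    using spectral_radius_jnf_norm_bound_le_1_upper_triangular[OF M radius] by blast
  define C where "C = (\<bar>c1\<bar> + \<bar>c2\<bar>) * (\<Sum>j<N. cmod (x $ j))"
  have "cmod ((M ^\<^sub>m k *\<^sub>v x) $ i) \<le> C * real (k + 1) ^ (N - 1)" if i: "i < N" for k i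
  proof -
    have entry: "cmod ((M ^\<^sub>m k) $$ (i, j)) \<le> (\<bar>c1\<bar> + \<bar>c2\<bar>) * real (k + 1) ^ (N - 1)"
      if j: "j < N" for j
    proof -
      define X where "X = real (k + 1) ^ (N - 1)"
      have X: "real k ^ (N - 1) \<le> X" "1 \<le> X"
        unfolding X_def by (simp_all add: power_mono)
      have "c1 \<le> \<bar>c1\<bar> * X"
        using mult_left_mono[OF X(2), of "\<bar>c1\<bar>"] by linarith
      moreover have "c2 * real k ^ (N - 1) \<le> \<bar>c2\<bar> * X"
        using mult_right_mono[OF abs_ge_self[of c2], of "real k ^ (N - 1)"]
          mult_left_mono[OF X(1), of "\<bar>c2\<bar>"] by simp
      moreover have "cmod ((M ^\<^sub>m k) $$ (i, j)) \<le> c1 + c2 * real k ^ (N - 1)"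
        using c[of k] i j M unfolding norm_bound_def by auto
      ultimately show ?thesis
        unfolding X_def by (simp add: distrib_right)
    qed
    have "cmod ((M ^\<^sub>m k *\<^sub>v x) $ i) = cmod (\<Sum>j<N. (M ^\<^sub>m k) $$ (i, j) * x $ j)"
      using i M x by (simp add: scalar_prod_def atLeast0LessThan)
    also have "\<dots> \<le> (\<Sum>j<N. cmod ((M ^\<^sub>m k) $$ (i, j)) * cmod (x $ j))"
      by (rule order_trans[OF norm_sum]) (simp add: norm_mult)
    also have "\<dots> \<le> (\<Sum>j<N. (\<bar>c1\<bar> + \<bar>c2\<bar>) * real (k + 1) ^ (N - 1) * cmod (x $ j))"
      by (intro sum_mono mult_right_mono entry) auto
    also have "\<dots> = C * real (k + 1) ^ (N - 1)"
      unfolding C_def by (simp add: sum_distrib_left sum_distrib_right mult_ac)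
    finally show ?thesis .
  qed
  then show ?thesis by blast
qed

lemma linear_recurrence_growth:
  fixes A :: "'s \<Rightarrow> 's \<Rightarrow> real" and g :: "nat \<Rightarrow> 's \<Rightarrow> real"
  assumes S: "finite S" "S \<noteq> {}" and r: "r > 0"
    and eig: "\<And>\<mu>. is_eigenvalue A S \<mu> \<Longrightarrow> cmod \<mu> \<le> r"
    and g_Suc: "\<And>k s. s \<in> S \<Longrightarrow> g (Suc k) s = (\<Sum>t\<in>S. A s t * g k t)"
  shows "\<exists>C K. \<forall>k. \<forall>s\<in>S. \<bar>g k s\<bar> \<le> C * real (k + 1) ^ K * r ^ k"
proof -
  define N where "N = card S"
  obtain f where f: "bij_betw f {0..<N} S"
    using ex_bij_betw_nat_finite[OF S(1)] N_def by blast
  have N: "N > 0"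
    using S by (simp add: N_def card_gt_0_iff)
  define M where "M = scaled_mat A f N r"
  define G where "G k = vec N ((\<lambda>s. complex_of_real (g k s / r ^ k)) \<circ> f)" for k
  have G_carrier: "G k \<in> carrier_vec N" for k
    by (simp add: G_def)
  have G_Suc: "G (Suc k) = M *\<^sub>v G k" for k
  proof (rule eq_vecI)
    fix i assume "i < dim_vec (M *\<^sub>v G k)"
    then have i: "i < N" by (simp add: M_def)
    then have fi: "f i \<in> S"
      using bij_betw_apply[OF f] by simp
    have "(M *\<^sub>v G k) $ i
            = (\<Sum>t\<in>S. complex_of_real (A (f i) t) * complex_of_real (g k t / r ^ k)) / complex_of_real r"
      unfolding M_def G_def by (rule scaled_mat_mult_vec[OF f i])
    also have "\<dots> = complex_of_real ((\<Sum>t\<in>S. A (f i) t * g k t) / r ^ k) / complex_of_real r"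
      by (simp only: of_real_mult[symmetric] of_real_sum[symmetric] sum_divide_distrib
          times_divide_eq_right)
    also have "\<dots> = complex_of_real (g (Suc k) (f i) / r ^ Suc k)"
      unfolding g_Suc[OF fi] of_real_divide[symmetric] by (simp only: divide_divide_eq_left power_Suc2)
    finally show "G (Suc k) $ i = (M *\<^sub>v G k) $ i"
      using i by (simp add: G_def)
  qed (simp add: M_def G_def)
  have G_pow: "G k = M ^\<^sub>m k *\<^sub>v G 0" for k
  proof (induction k)
    case 0
    then show ?case by (simp add: M_def G_def)
  next
    case (Suc k)
    have M: "M \<in> carrier_mat N N"
      by (simp add: M_def)
    have "G (Suc k) = M *\<^sub>v (M ^\<^sub>m k *\<^sub>v G 0)"
      using G_Suc Suc.IH by simp
    also have "\<dots> = (M * M ^\<^sub>m k) *\<^sub>v G 0"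
      by (rule assoc_mult_mat_vec[symmetric, OF M pow_carrier_mat[OF M] G_carrier])
    also have "\<dots> = M ^\<^sub>m Suc k *\<^sub>v G 0"
      using pow_mat_commute[OF M, of k] by simp
    finally show ?case .
  qed
  obtain C K where CK: "\<And>k i. i < N \<Longrightarrow> cmod ((M ^\<^sub>m k *\<^sub>v G 0) $ i) \<le> C * real (k + 1) ^ K"
    using pow_mat_mult_vec_poly_bound[OF scaled_mat_carrier[of A f N r, folded M_def]
        spectral_radius_scaled_mat_le_1[of f N S r A, OF f N r eig, folded M_def] G_carrier]
    by blast
  have "\<bar>g k s\<bar> \<le> C * real (k + 1) ^ K * r ^ k" if s: "s \<in> S" for k s
  proof -
    obtain i where i: "i < N" "s = f i"
      using s bij_betw_imp_surj_on[OF f] by (metis atLeastLessThan_iff imageE)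
    have "\<bar>g k s\<bar> / r ^ k = cmod (G k $ i)"
      using i r by (simp add: G_def norm_divide norm_power)
    also have "\<dots> \<le> C * real (k + 1) ^ K"
      unfolding G_pow[of k] by (rule CK[OF i(1)])
    finally show ?thesis
      using r by (simp add: divide_le_eq)
  qed
  then show ?thesis by blast
qed

section \<open>Erasure patterns and confusable words\<close>

lemma ones_Nil [simp]: "ones [] = 0"
  by (simp add: ones_def)

lemma ones_Cons [simp]: "ones (b # v) = (if b then Suc (ones v) else ones v)"
  by (simp add: ones_def)

lemma ones_append [simp]: "ones (u @ v) = ones u + ones v"
  by (simp add: ones_def)

lemma ones_le_length: "ones v \<le> length v"
  by (simp add: ones_def)

lemma ones_map: "ones (map P xs) = length (filter P xs)"
  by (simp add: ones_def filter_map comp_def)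

lemma ones_map_Not: "ones (map Not v) = length v - ones v"
  by (induction v) (auto simp: Suc_diff_le ones_le_length)

lemma card_lists_length_UNIV: "card {xs :: 'a::finite list. length xs = n} = CARD('a) ^ n"
  using card_lists_length_eq[of "UNIV :: 'a set" n] by simp

definition masked :: "bool list \<Rightarrow> 'a list \<Rightarrow> 'a list" where
  "masked v y = map fst (filter snd (zip y v))"

lemma masked_Cons [simp]: "masked (b # v) (a # y) = (if b then a # masked v y else masked v y)"
  by (simp add: masked_def)

lemma length_masked: "length y = length v \<Longrightarrow> length (masked v y) = ones v"
proof (induction v arbitrary: y)
  case Nil
  then show ?case by (simp add: masked_def)
next
  case (Cons b v)
  then show ?case by (cases y) auto
qed

lemma masked_eq_iff:
  "length y = length v \<Longrightarrow> length y' = length v \<Longrightarrow>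
     masked v y = masked v y' \<longleftrightarrow> (\<forall>i < length v. v ! i \<longrightarrow> y ! i = y' ! i)"
proof (induction v arbitrary: y y')
  case Nil
  then show ?case by (simp add: masked_def)
next
  case (Cons b v)
  then obtain a z a' z' where "y = a # z" "y' = a' # z'"
    by (metis length_Suc_conv)
  with Cons show ?case
    using length_masked[of z v] length_masked[of z' v] by (auto simp: All_less_Suc2)
qed

lemma card_agree_off_le:
  fixes x :: "'a::finite list"
  assumes "length v = n"
  shows "card {y. length y = n \<and> (\<forall>i < n. \<not> v ! i \<longrightarrow> x ! i = y ! i)} \<le> CARD('a) ^ ones v"
proof -
  let ?Y = "{y. length y = n \<and> (\<forall>i < n. \<not> v ! i \<longrightarrow> x ! i = y ! i)}"
  have "inj_on (masked v) ?Y"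
  proof (rule inj_onI)
    fix y y' assume y: "y \<in> ?Y" "y' \<in> ?Y" and eq: "masked v y = masked v y'"
    have "y ! i = y' ! i" if "i < n" for i
      using y eq masked_eq_iff[of y v y'] assms that by (cases "v ! i") auto
    then show "y = y'"
      using y by (simp add: nth_equalityI)
  qed
  moreover have "masked v ` ?Y \<subseteq> {z. length z = ones v}"
    using length_masked assms by auto
  ultimately have "card ?Y \<le> card {z :: 'a list. length z = ones v}"
    by (rule card_inj_on_le) (rule finite_list_length)
  then show ?thesis
    by (simp add: card_lists_length_UNIV)
qed

lemma sw_output_eq_iff:
  assumes "length x = n" "length x' = n" "length v = n" "length v' = n"
  shows "sw_output x v = sw_output x' v' \<longleftrightarrow> v = v' \<and> (\<forall>i < n. \<not> v ! i \<longrightarrow> x ! i = x' ! i)"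
proof -
  have "sw_output x v = sw_output x' v' \<longleftrightarrow>
          (\<forall>i < n. (if v ! i then None else Some (x ! i)) = (if v' ! i then None else Some (x' ! i)))"
    using assms by (simp add: sw_output_def list_eq_iff_nth_eq)
  also have "\<dots> \<longleftrightarrow> (\<forall>i < n. v ! i = v' ! i \<and> (\<not> v ! i \<longrightarrow> x ! i = x' ! i))"
    by (intro all_cong) auto
  also have "\<dots> \<longleftrightarrow> v = v' \<and> (\<forall>i < n. \<not> v ! i \<longrightarrow> x ! i = x' ! i)"
    using assms by (auto simp: list_eq_iff_nth_eq)
  finally show ?thesis .
qed

definition confusable :: "nat \<Rightarrow> nat \<Rightarrow> nat \<Rightarrow> 'a list \<Rightarrow> 'a list \<Rightarrow> bool" where
  "confusable w d n x y \<longleftrightarrow>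
     (\<exists>v. length v = n \<and> sw_admissible w d v \<and> (\<forall>i < n. \<not> v ! i \<longrightarrow> x ! i = y ! i))"

lemma zero_error_code_iff:
  "zero_error_code w d n F \<longleftrightarrow>
     (\<forall>x\<in>F. length x = n) \<and> (\<forall>x\<in>F. \<forall>y\<in>F. x \<noteq> y \<longrightarrow> \<not> confusable w d n x y)"
  unfolding zero_error_code_def confusable_def
  by (rule conj_cong[OF refl]) (auto simp: sw_output_eq_iff)

section \<open>Sliding-window constraints and the upper bound\<close>

lemma sw_admissible_replicate_False: "sw_admissible w d (replicate n False)"
  unfolding sw_admissible_def
  by (intro exI[of _ "replicate w False"]) (simp add: ones_def)

lemma ones_drop_mono: "i \<le> j \<Longrightarrow> ones (drop j v) \<le> ones (drop i v)"
  by (metis append_take_drop_id drop_drop le_add_diff_inverse2 le_add2 ones_append)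

lemma ones_suffix_le:
  assumes windows: "\<And>i. i + w \<le> length L \<Longrightarrow> ones (take w (drop i L)) \<le> d"
    and w: "1 \<le> w" "w \<le> length L" and m: "m \<le> length L"
  shows "ones (drop (length L - m) L) \<le> d * (m div w + 1)"
  using m
proof (induction m rule: less_induct)
  case (less m)
  show ?case
  proof (cases "m < w")
    case True
    have "ones (drop (length L - m) L) \<le> ones (drop (length L - w) L)"
      using True by (intro ones_drop_mono) auto
    also have "\<dots> = ones (take w (drop (length L - w) L))"
      using w by simp
    also have "\<dots> \<le> d"
      using windows[of "length L - w"] w by simp
    finally show ?thesis by simp
  next
    case False
    define j where "j = length L - m"
    have "drop w (drop j L) = drop (length L - (m - w)) L"
      using False less.prems by (simp add: j_def add.commute)
    then have "ones (drop j L) = ones (take w (drop j L)) + ones (drop (length L - (m - w)) L)"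
      by (metis append_take_drop_id ones_append)
    also have "\<dots> \<le> d + d * ((m - w) div w + 1)"
      using windows[of j] less.IH[of "m - w"] False less.prems w by (intro add_mono) (auto simp: j_def)
    also have "\<dots> = d * (m div w + 1)"
      using False w by (simp add: div_if)
    finally show ?thesis
      unfolding j_def .
  qed
qed

lemma ones_le_if_sw_admissible:
  assumes "sw_admissible w d v" and "1 \<le> w"
  shows "ones v \<le> d * (length v div w + 1)"
proof -
  obtain s where s: "length s = w" "\<forall>i \<le> length v. ones (take w (drop i (s @ v))) \<le> d"
    using assms(1) unfolding sw_admissible_def by blast
  have "ones (drop (length (s @ v) - length v) (s @ v)) \<le> d * (length v div w + 1)"
    using s assms(2) by (intro ones_suffix_le) auto
  then show ?thesis
    using s(1) by simp
qed

lemma length_filter_upt: "length (filter P [a..<b]) = card {j. a \<le> j \<and> j < b \<and> P j}"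
proof -
  have "length (filter P [a..<b]) = card (set (filter P [a..<b]))"
    by (rule distinct_card[symmetric]) simp
  also have "set (filter P [a..<b]) = {j. a \<le> j \<and> j < b \<and> P j}"
    by auto
  finally show ?thesis .
qed

lemma length_filter_mod_less_window:
  assumes "d \<le> w"
  shows "length (filter (\<lambda>j. j mod w < d) [i..<i + w]) = d"
proof (cases "w = 0")
  case True
  then show ?thesis using assms by simp
next
  case False
  show ?thesis
  proof (induction i)
    case 0
    have "{j. 0 \<le> j \<and> j < 0 + w \<and> j mod w < d} = {..<d}"
      using assms by auto
    then show ?case
      unfolding length_filter_upt by simp
  next
    case (Suc i)
    define P where "P = (\<lambda>j::nat. j mod w < d)"
    have "[Suc i..<Suc i + w] = [Suc i..<i + w] @ [i + w]"
      using False by simp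
    then have "length (filter P [Suc i..<Suc i + w])
                 = length (filter P [Suc i..<i + w]) + (if P i then 1 else 0)"
      by (simp add: P_def)
    also have "\<dots> = length (filter P [i..<i + w])"
      using False by (simp add: upt_conv_Cons)
    finally show ?case
      using Suc.IH by (simp add: P_def)
  qed
qed

lemma mod_less_density:
  assumes "1 \<le> w" and "d \<le> w"
  shows "d * n \<le> length (filter (\<lambda>j. j mod w < d) [0..<n]) * w"
proof (induction n rule: less_induct)
  case (less n)
  show ?case
  proof (cases "n < w")
    case True
    have "{j. 0 \<le> j \<and> j < n \<and> j mod w < d} = {..<min n d}"
      using True by auto
    then show ?thesis
      using True assms by (auto simp: length_filter_upt min_def intro: mult_le_mono)
  next
    case False
    then have "[0..<n] = [0..<n - w] @ [n - w..<(n - w) + w]"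
      by (metis le_add_diff_inverse2 not_less upt_add_eq_append zero_le)
    then have "length (filter (\<lambda>j. j mod w < d) [0..<n])
                 = length (filter (\<lambda>j. j mod w < d) [0..<n - w]) + d"
      using length_filter_mod_less_window[OF assms(2), of "n - w"] by simp
    moreover have "d * (n - w) \<le> length (filter (\<lambda>j. j mod w < d) [0..<n - w]) * w"
      using less.IH[of "n - w"] False assms(1) by simp
    ultimately show ?thesis
      using False assms(2) by (simp add: algebra_simps)
  qed
qed

definition periodic_erasures :: "nat \<Rightarrow> nat \<Rightarrow> nat \<Rightarrow> bool list" where
  "periodic_erasures w d n = map (\<lambda>j. j mod w < d) [w..<w + n]"

lemma length_periodic_erasures [simp]: "length (periodic_erasures w d n) = n"
  by (simp add: periodic_erasures_def)

lemma sw_admissible_periodic_erasures: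
  assumes "d \<le> w"
  shows "sw_admissible w d (periodic_erasures w d n)"
proof -
  define P where "P = (\<lambda>j::nat. j mod w < d)"
  have pattern: "map P [0..<w] @ periodic_erasures w d n = map P [0..<w + n]"
    by (simp add: periodic_erasures_def P_def upt_add_eq_append[of 0 w n])
  have "ones (take w (drop i (map P [0..<w + n]))) \<le> d" if "i \<le> n" for i
    using that length_filter_mod_less_window[OF assms, of i]
    by (simp add: P_def ones_map take_map drop_map)
  then show ?thesis
    unfolding sw_admissible_def pattern[symmetric]
    by (intro exI[of _ "map P [0..<w]"]) simp
qed

lemma ones_periodic_erasures:
  assumes "1 \<le> w" and "d \<le> w"
  shows "d * n \<le> ones (periodic_erasures w d n) * w"
proof -
  have "[w..<w + n] = map (\<lambda>j. j + w) [0..<n]"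
    by (simp add: map_add_upt add.commute)
  then have "ones (periodic_erasures w d n) = length (filter (\<lambda>j. j mod w < d) [0..<n])"
    by (simp add: periodic_erasures_def ones_map filter_map comp_def)
  then show ?thesis
    using mod_less_density[OF assms] by simp
qed

lemma card_code_le:
  fixes F :: "'a::finite list set"
  assumes code: "zero_error_code w d n F" and v: "sw_admissible w d v" "length v = n"
  shows "card F \<le> CARD('a) ^ (n - ones v)"
proof -
  have len: "\<And>x. x \<in> F \<Longrightarrow> length x = n"
    using code by (simp add: zero_error_code_iff)
  have "inj_on (masked (map Not v)) F"
  proof (rule inj_onI)
    fix x x' assume x: "x \<in> F" "x' \<in> F" and eq: "masked (map Not v) x = masked (map Not v) x'"
    then have "\<forall>i < n. \<not> v ! i \<longrightarrow> x ! i = x' ! i"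
      using masked_eq_iff[of x "map Not v" x'] len v(2) by simp
    then have "confusable w d n x x'"
      unfolding confusable_def using v by blast
    then show "x = x'"
      using code x by (auto simp: zero_error_code_iff)
  qed
  moreover have "masked (map Not v) ` F \<subseteq> {z. length z = n - ones v}"
    using length_masked[of _ "map Not v"] len v(2) by (auto simp: ones_map_Not)
  ultimately have "card F \<le> card {z :: 'a list. length z = n - ones v}"
    by (rule card_inj_on_le) (rule finite_list_length)
  then show ?thesis
    by (simp add: card_lists_length_UNIV)
qed

lemma finite_code: "zero_error_code w d n (F :: 'a::finite list set) \<Longrightarrow> finite F"
  by (rule finite_subset[OF _ finite_list_length[of n]]) (auto simp: zero_error_code_def)

lemma code_rate_le:
  fixes F :: "'a::finite list set"
  assumes code: "zero_error_code w d n F" and F: "F \<noteq> {}" and n: "n \<ge> 1"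
    and w: "1 \<le> w" and d: "d \<le> w" and q: "CARD('a) \<ge> 2"
  shows "log (real CARD('a)) (real (card F)) / real n \<le> 1 - real d / real w"
proof -
  define v where "v = periodic_erasures w d n"
  have "card F > 0"
    using finite_code[OF code] F by (simp add: card_gt_0_iff)
  then have "log (real CARD('a)) (real (card F)) \<le> log (real CARD('a)) (real CARD('a) ^ (n - ones v))"
    using card_code_le[OF code sw_admissible_periodic_erasures[OF d]] q
    by (intro log_mono) (simp_all add: v_def of_nat_power[symmetric] del: of_nat_power)
  also have "\<dots> = real n - real (ones v)"
    using q ones_le_length[of v] by (simp add: log_nat_power v_def)
  also have "\<dots> \<le> real n - real d * real n / real w"
    using ones_periodic_erasures[OF w d, of n] w
    by (simp add: v_def divide_le_eq of_nat_mult[symmetric] del: of_nat_mult)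
  also have "\<dots> = real n * (1 - real d / real w)"
    by (simp add: algebra_simps)
  finally show ?thesis
    using n by (simp add: divide_le_eq mult.commute)
qed

section \<open>Admissible noise words as walks in the state graph\<close>

definition admissible_from :: "nat \<Rightarrow> nat \<Rightarrow> bool list \<Rightarrow> bool list \<Rightarrow> bool" where
  "admissible_from w d s v \<longleftrightarrow> (\<forall>i \<le> length v. ones (take w (drop i (s @ v))) \<le> d)"

definition continuations :: "nat \<Rightarrow> nat \<Rightarrow> nat \<Rightarrow> bool list \<Rightarrow> bool list set" where
  "continuations w d k s = {v. length v = k \<and> admissible_from w d s v}"

definition admissible_words :: "nat \<Rightarrow> nat \<Rightarrow> nat \<Rightarrow> bool list set" where
  "admissible_words w d n = {v. length v = n \<and> sw_admissible w d v}"

lemma sw_admissible_iff_admissible_from: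
  "sw_admissible w d v \<longleftrightarrow> (\<exists>s. length s = w \<and> admissible_from w d s v)"
  unfolding sw_admissible_def admissible_from_def ..

lemma finite_sw_states: "finite (sw_states w d)"
  by (rule finite_subset[OF _ finite_list_length[of w]]) (auto simp: sw_states_def)

lemma replicate_False_in_sw_states: "replicate w False \<in> sw_states w d"
  by (simp add: sw_states_def ones_def)

lemma finite_continuations: "finite (continuations w d k s)"
  by (rule finite_subset[OF _ finite_list_length[of k]]) (auto simp: continuations_def)

lemma finite_admissible_words: "finite (admissible_words w d n)"
  by (rule finite_subset[OF _ finite_list_length[of n]]) (auto simp: admissible_words_def)

lemma all_le_Suc_iff: "(\<forall>i \<le> Suc n. P i) \<longleftrightarrow> P 0 \<and> (\<forall>i \<le> n. P (Suc i))"
  using All_less_Suc2[of "Suc n" P] by (simp add: less_Suc_eq_le)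

lemma admissible_from_Cons:
  assumes "length s = w" and "1 \<le> w"
  shows "admissible_from w d s (c # v) \<longleftrightarrow> ones s \<le> d \<and> admissible_from w d (tl s @ [c]) v"
proof -
  obtain a s' where s: "s = a # s'"
    using assms by (cases s) auto
  have shift: "drop (Suc j) (s @ c # v) = drop j ((tl s @ [c]) @ v)" for j
    by (simp add: s)
  have head: "take w (s @ c # v) = s"
    using assms(1) by simp
  show ?thesis
    unfolding admissible_from_def by (simp only: length_Cons all_le_Suc_iff drop_0 shift head)
qed

lemma in_sw_states_if_admissible_from:
  "length s = w \<Longrightarrow> admissible_from w d s v \<Longrightarrow> s \<in> sw_states w d"
  unfolding admissible_from_def sw_states_def by (auto dest: spec[of _ 0])

lemma continuations_eq_empty: "length t = w \<Longrightarrow> t \<notin> sw_states w d \<Longrightarrow> continuations w d k t = {}"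
  unfolding continuations_def using in_sw_states_if_admissible_from by blast

lemma continuations_Suc:
  assumes s: "s \<in> sw_states w d" and w: "1 \<le> w"
  shows "continuations w d (Suc k) s
           = Cons False ` continuations w d k (tl s @ [False]) \<union> Cons True ` continuations w d k (tl s @ [True])"
proof (rule Set.set_eqI)
  have s': "length s = w" "ones s \<le> d"
    using s by (auto simp: sw_states_def)
  fix v
  show "v \<in> continuations w d (Suc k) s \<longleftrightarrow>
          v \<in> Cons False ` continuations w d k (tl s @ [False]) \<union> Cons True ` continuations w d k (tl s @ [True])"
  proof (cases v)
    case Nil
    then show ?thesis by (auto simp: continuations_def)
  next
    case (Cons c v')
    then show ?thesis
      using admissible_from_Cons[OF s'(1) w, of d c v'] s'(2)
      by (cases c) (auto simp: continuations_def)
  qed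
qed

lemma card_continuations_Suc:
  assumes s: "s \<in> sw_states w d" and w: "1 \<le> w"
  shows "real (card (continuations w d (Suc k) s))
           = (\<Sum>t\<in>sw_states w d. sw_adj w d s t * real (card (continuations w d k t)))"
proof -
  let ?S = "sw_states w d" and ?g = "\<lambda>t. real (card (continuations w d k t))"
  define e where "e c = tl s @ [c]" for c
  have len_e: "length (e c) = w" for c
    using s w by (auto simp: e_def sw_states_def)
  have "(\<Sum>t\<in>?S. sw_adj w d s t * ?g t) = (\<Sum>t\<in>?S. if t \<in> range e then ?g t else 0)"
    using s by (intro sum.cong) (auto simp: sw_adj_def e_def image_iff)
  also have "\<dots> = (\<Sum>t\<in>?S \<inter> range e. ?g t)"
    by (rule sum.inter_restrict[OF finite_sw_states, symmetric])
  also have "\<dots> = (\<Sum>t\<in>range e. ?g t)"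
  proof (rule sum.mono_neutral_left)
    show "\<forall>t\<in>range e - ?S \<inter> range e. ?g t = 0"
    proof
      fix t assume "t \<in> range e - ?S \<inter> range e"
      then obtain c where "t = e c" "t \<notin> ?S"
        by auto
      then show "?g t = 0"
        using continuations_eq_empty[OF len_e[of c]] by simp
    qed
  qed simp_all
  also have "\<dots> = (\<Sum>c\<in>UNIV. ?g (e c))"
    by (rule sum.reindex[unfolded comp_def]) (simp add: inj_def e_def)
  also have "\<dots> = ?g (e False) + ?g (e True)"
    by (simp add: UNIV_bool)
  also have "\<dots> = real (card (continuations w d (Suc k) s))"
  proof -
    have "card (continuations w d (Suc k) s)
            = card (Cons False ` continuations w d k (e False)) + card (Cons True ` continuations w d k (e True))"
      unfolding continuations_Suc[OF s w] e_def
      by (rule card_Un_disjoint) (auto simp: finite_continuations)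
    then show ?thesis
      by (simp add: card_image)
  qed
  finally show ?thesis ..
qed

lemma card_admissible_words_le:
  "card (admissible_words w d n) \<le> (\<Sum>s\<in>sw_states w d. card (continuations w d n s))"
proof -
  have "admissible_words w d n \<subseteq> (\<Union>s\<in>sw_states w d. continuations w d n s)"
  proof
    fix v assume "v \<in> admissible_words w d n"
    then obtain s where "length v = n" "length s = w" "admissible_from w d s v"
      unfolding admissible_words_def sw_admissible_iff_admissible_from by blast
    then show "v \<in> (\<Union>s\<in>sw_states w d. continuations w d n s)"
      using in_sw_states_if_admissible_from unfolding continuations_def by blast
  qed
  then have "card (admissible_words w d n) \<le> card (\<Union>s\<in>sw_states w d. continuations w d n s)"
    by (intro card_mono) (simp_all add: finite_sw_states finite_continuations)
  also have "\<dots> \<le> (\<Sum>s\<in>sw_states w d. card (continuations w d n s))"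
    by (rule card_UN_le[OF finite_sw_states])
  finally show ?thesis .
qed

lemma card_admissible_words_growth:
  assumes w: "1 \<le> w" and r: "r > 0"
    and eig: "\<And>\<mu>. is_eigenvalue (sw_adj w d) (sw_states w d) \<mu> \<Longrightarrow> cmod \<mu> \<le> r"
  shows "\<exists>B > 0. \<exists>K. \<forall>n. real (card (admissible_words w d n)) \<le> B * real (n + 1) ^ K * r ^ n"
proof -
  let ?S = "sw_states w d"
  have "\<exists>C K. \<forall>k. \<forall>s\<in>?S. \<bar>real (card (continuations w d k s))\<bar> \<le> C * real (k + 1) ^ K * r ^ k"
    by (rule linear_recurrence_growth[OF finite_sw_states _ r eig])
      (use replicate_False_in_sw_states[of w d] card_continuations_Suc[OF _ w] in auto)
  then obtain C K
    where CK: "\<And>k s. s \<in> ?S \<Longrightarrow> \<bar>real (card (continuations w d k s))\<bar> \<le> C * real (k + 1) ^ K * r ^ k"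
    by blast
  define B where "B = 1 + real (card ?S) * \<bar>C\<bar>"
  have "real (card (admissible_words w d n)) \<le> B * real (n + 1) ^ K * r ^ n" for n
  proof -
    have each: "real (card (continuations w d n s)) \<le> \<bar>C\<bar> * real (n + 1) ^ K * r ^ n" if "s \<in> ?S" for s
    proof -
      have "real (card (continuations w d n s)) \<le> C * real (n + 1) ^ K * r ^ n"
        using CK[OF that, of n] by linarith
      also have "\<dots> \<le> \<bar>C\<bar> * real (n + 1) ^ K * r ^ n"
        using r by (intro mult_right_mono) auto
      finally show ?thesis .
    qed
    have "real (card (admissible_words w d n)) \<le> (\<Sum>s\<in>?S. real (card (continuations w d n s)))"
      using card_admissible_words_le[of w d n] by (simp add: of_nat_sum[symmetric] del: of_nat_sum)
    also have "\<dots> \<le> real (card ?S) * (\<bar>C\<bar> * real (n + 1) ^ K * r ^ n)"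
      using sum_mono[OF each] by simp
    also have "\<dots> \<le> B * real (n + 1) ^ K * r ^ n"
      using r by (simp add: B_def algebra_simps)
    finally show ?thesis .
  qed
  moreover have "B > 0"
    by (simp add: B_def add_pos_nonneg)
  ultimately show ?thesis by blast
qed

section \<open>The lower bound\<close>

lemma ex_independent_subset:
  assumes fin: "finite V" and refl: "\<And>x. x \<in> V \<Longrightarrow> R x x"
    and sym: "\<And>x y. x \<in> V \<Longrightarrow> y \<in> V \<Longrightarrow> R x y \<Longrightarrow> R y x"
    and degree: "\<And>x. x \<in> V \<Longrightarrow> card {y \<in> V. R x y} \<le> D"
  shows "\<exists>F \<subseteq> V. (\<forall>x\<in>F. \<forall>y\<in>F. x \<noteq> y \<longrightarrow> \<not> R x y) \<and> card V \<le> D * card F"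
proof -
  define independent where "independent F \<longleftrightarrow> F \<subseteq> V \<and> (\<forall>x\<in>F. \<forall>y\<in>F. x \<noteq> y \<longrightarrow> \<not> R x y)" for F
  have "independent {}"
    by (simp add: independent_def)
  moreover have "\<forall>G. independent G \<longrightarrow> card G < Suc (card V)"
    using card_mono[OF fin] by (simp add: independent_def less_Suc_eq_le)
  ultimately obtain F where F: "independent F" and max: "\<And>G. independent G \<Longrightarrow> card G \<le> card F"
    using Lattices_Big.ex_has_greatest_nat[of independent "{}" card "Suc (card V)"] by blast
  have FV: "F \<subseteq> V"
    using F by (simp add: independent_def)
  then have finF: "finite F"
    using fin by (rule finite_subset)
  have "V \<subseteq> (\<Union>x\<in>F. {y \<in> V. R x y})"
  proof
    fix y assume y: "y \<in> V"
    show "y \<in> (\<Union>x\<in>F. {y \<in> V. R x y})"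
    proof (rule ccontr)
      assume "y \<notin> (\<Union>x\<in>F. {y \<in> V. R x y})"
      then have no_edge: "\<not> R x y" "\<not> R y x" if "x \<in> F" for x
        using y that FV sym by blast+
      then have "y \<notin> F"
        using refl y by blast
      moreover have "independent (insert y F)"
        using F y no_edge unfolding independent_def by blast
      ultimately have "card (insert y F) \<le> card F"
        using max by blast
      with \<open>y \<notin> F\<close> finF show False
        by simp
    qed
  qed
  then have "card V \<le> card (\<Union>x\<in>F. {y \<in> V. R x y})"
    by (intro card_mono) (simp_all add: finF fin)
  also have "\<dots> \<le> (\<Sum>x\<in>F. card {y \<in> V. R x y})"
    by (rule card_UN_le[OF finF])
  also have "\<dots> \<le> D * card F"
    using sum_bounded_above[of F "\<lambda>x. card {y \<in> V. R x y}" D] degree FV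
    by (simp add: subset_iff mult.commute)
  finally show ?thesis
    using F unfolding independent_def by blast
qed

lemma card_confusable_le:
  fixes x :: "'a::finite list"
  assumes w: "1 \<le> w"
  shows "card {y. length y = n \<and> confusable w d n x y}
           \<le> card (admissible_words w d n) * CARD('a) ^ (d * (n div w + 1))"
proof -
  define agree_off where "agree_off v = {y :: 'a list. length y = n \<and> (\<forall>i < n. \<not> v ! i \<longrightarrow> x ! i = y ! i)}" for v
  have each: "card (agree_off v) \<le> CARD('a) ^ (d * (n div w + 1))" if v: "v \<in> admissible_words w d n" for v
  proof -
    have "card (agree_off v) \<le> CARD('a) ^ ones v"
      using card_agree_off_le[of v n x] v by (simp add: agree_off_def admissible_words_def)
    also have "\<dots> \<le> CARD('a) ^ (d * (n div w + 1))"
      using ones_le_if_sw_admissible[OF _ w, of d v] v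
      by (intro power_increasing) (simp_all add: admissible_words_def Suc_leI)
    finally show ?thesis .
  qed
  have "{y. length y = n \<and> confusable w d n x y} = (\<Union>v\<in>admissible_words w d n. agree_off v)"
    unfolding confusable_def admissible_words_def agree_off_def by blast
  then have "card {y. length y = n \<and> confusable w d n x y} \<le> (\<Sum>v\<in>admissible_words w d n. card (agree_off v))"
    using card_UN_le[OF finite_admissible_words] by simp
  also have "\<dots> \<le> (\<Sum>v\<in>admissible_words w d n. CARD('a) ^ (d * (n div w + 1)))"
    by (rule sum_mono) (rule each)
  finally show ?thesis
    by simp
qed

lemma gilbert_varshamov_code:
  assumes w: "1 \<le> w"
  shows "\<exists>F :: 'a::finite list set. F \<noteq> {} \<and> zero_error_code w d n F \<and>
           CARD('a) ^ n \<le> card (admissible_words w d n) * CARD('a) ^ (d * (n div w + 1)) * card F"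
proof -
  let ?V = "{x :: 'a list. length x = n}" and ?D = "card (admissible_words w d n) * CARD('a) ^ (d * (n div w + 1))"
  have "\<exists>F \<subseteq> ?V. (\<forall>x\<in>F. \<forall>y\<in>F. x \<noteq> y \<longrightarrow> \<not> confusable w d n x y) \<and> card ?V \<le> ?D * card F"
  proof (rule ex_independent_subset)
    show "confusable w d n x x" for x :: "'a list"
      unfolding confusable_def using sw_admissible_replicate_False by (intro exI[of _ "replicate n False"]) simp
    show "confusable w d n y x" if "confusable w d n x y" for x y :: "'a list"
      using that unfolding confusable_def by metis
    show "card {y \<in> ?V. confusable w d n x y} \<le> ?D" for x
      using card_confusable_le[OF w, of n d x] by (simp add: conj_commute)
  qed (rule finite_list_length)
  then obtain F where F: "F \<subseteq> ?V" "\<forall>x\<in>F. \<forall>y\<in>F. x \<noteq> y \<longrightarrow> \<not> confusable w d n x y"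
    and card_V: "CARD('a) ^ n \<le> ?D * card F"
    by (auto simp: card_lists_length_UNIV)
  have "F \<noteq> {}"
    using card_V by auto
  moreover have "zero_error_code w d n F"
    using F by (auto simp: zero_error_code_iff)
  ultimately show ?thesis
    using card_V by (auto simp: mult.assoc)
qed

lemma rate_ge_of_card_bound:
  fixes q B r a c :: real and n m K d w :: nat
  assumes q: "q > 1" and B: "B > 0" and r: "r > 0" and c: "c \<ge> 1" and n: "n \<ge> 1"
    and card: "q ^ n \<le> a * q ^ m * c" and growth: "a \<le> B * real (n + 1) ^ K * r ^ n"
    and m: "real m \<le> real d * real n / real w + real d"
  shows "1 - real d / real w - log q r - (log q B + real K * log q (real (n + 1)) + real d) / real n
           \<le> log q c / real n"
proof -
  have "q ^ n \<le> (B * real (n + 1) ^ K * r ^ n) * q ^ m * c"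
    using card growth c q by (smt (verit) mult_right_mono zero_le_power)
  then have "log q (q ^ n) \<le> log q ((B * real (n + 1) ^ K * r ^ n) * q ^ m * c)"
    using q B r c by (intro log_mono) auto
  then have "real n \<le> log q B + real K * log q (real (n + 1)) + real n * log q r + real m + log q c"
    using q B r c by (simp add: log_mult log_nat_power)
  then have "real n * (1 - real d / real w - log q r) - (log q B + real K * log q (real (n + 1)) + real d)
               \<le> log q c"
    using m by (simp add: algebra_simps)
  then have "(real n * (1 - real d / real w - log q r) - (log q B + real K * log q (real (n + 1)) + real d))
               / real n \<le> log q c / real n"
    using n by (intro divide_right_mono) auto
  moreover have "(real n * (1 - real d / real w - log q r) - (log q B + real K * log q (real (n + 1)) + real d))
               / real n = 1 - real d / real w - log q r - (log q B + real K * log q (real (n + 1)) + real d) / real n"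
    using n by (simp add: field_simps)
  ultimately show ?thesis
    by simp
qed

lemma zero_error_rates_nonempty:
  "{log (real CARD('a)) (real (card F)) / real n | n F.
      n \<ge> 1 \<and> F \<noteq> {} \<and> zero_error_code w d n (F :: 'a::finite list set)} \<noteq> {}"
proof -
  have "zero_error_code w d 1 {[undefined :: 'a]}"
    by (simp add: zero_error_code_def)
  then show ?thesis by blast
qed

lemma zero_error_capacity_le:
  assumes "1 \<le> w" and "d \<le> w" and "CARD('a::finite) \<ge> 2"
  shows "zero_error_capacity w d TYPE('a) \<le> 1 - real d / real w"
  unfolding zero_error_capacity_def
  by (rule cSup_least[OF zero_error_rates_nonempty]) (use code_rate_le[OF _ _ _ assms] in blast)

lemma rate_le_zero_error_capacity:
  assumes "1 \<le> w" and "d \<le> w" and "CARD('a::finite) \<ge> 2"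
    and "zero_error_code w d n (F :: 'a list set)" and "n \<ge> 1" and "F \<noteq> {}"
  shows "log (real CARD('a)) (real (card F)) / real n \<le> zero_error_capacity w d TYPE('a)"
  unfolding zero_error_capacity_def
proof (rule cSup_upper)
  show "bdd_above {log (real CARD('a)) (real (card F)) / real n | n F.
          n \<ge> 1 \<and> F \<noteq> {} \<and> zero_error_code w d n (F :: 'a list set)}"
    using code_rate_le[OF _ _ _ assms(1-3)] by (intro bdd_aboveI[of _ "1 - real d / real w"]) blast
qed (use assms in blast)

lemma zero_error_capacity_ge_rate_bound:
  fixes B r :: real and n K :: nat
  assumes w: "1 \<le> w" and d: "d \<le> w" and q: "CARD('a::finite) \<ge> 2"
    and B: "B > 0" and r: "r > 0" and n: "n \<ge> 1"
    and growth: "real (card (admissible_words w d n)) \<le> B * real (n + 1) ^ K * r ^ n"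
  shows "1 - real d / real w - log (real CARD('a)) r
           - (log (real CARD('a)) B + real K * log (real CARD('a)) (real (n + 1)) + real d) / real n
         \<le> zero_error_capacity w d TYPE('a)"
proof -
  define Q where "Q = real CARD('a)"
  have Q: "Q > 1"
    using q by (simp add: Q_def)
  obtain F :: "'a list set" where F: "F \<noteq> {}" "zero_error_code w d n F"
    and card: "CARD('a) ^ n \<le> card (admissible_words w d n) * CARD('a) ^ (d * (n div w + 1)) * card F"
    using gilbert_varshamov_code[OF w] by blast
  have "card F \<ge> 1"
    using F finite_code[OF F(2)] by (simp add: Suc_le_eq card_gt_0_iff)
  moreover have "real (d * (n div w + 1)) \<le> real d * real n / real w + real d"
    using mult_left_mono[OF of_nat_div_le_of_nat[of n w], of "real d"] by (simp add: algebra_simps)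
  moreover have "Q ^ n \<le> real (card (admissible_words w d n)) * Q ^ (d * (n div w + 1)) * real (card F)"
    using card unfolding Q_def
    by (simp add: of_nat_mult[symmetric] of_nat_power[symmetric] del: of_nat_mult of_nat_power)
  ultimately have "1 - real d / real w - log Q r - (log Q B + real K * log Q (real (n + 1)) + real d) / real n
                     \<le> log Q (real (card F)) / real n"
    using rate_ge_of_card_bound[OF Q B r _ n _ growth] by simp
  also have "\<dots> \<le> zero_error_capacity w d TYPE('a)"
    unfolding Q_def by (rule rate_le_zero_error_capacity[OF w d q F(2) n F(1)])
  finally show ?thesis
    unfolding Q_def .
qed

lemma zero_error_capacity_ge:
  assumes w: "1 \<le> w" and d: "d \<le> w" and q: "CARD('a::finite) \<ge> 2" and r: "r > 0"
    and eig: "\<And>\<mu>. is_eigenvalue (sw_adj w d) (sw_states w d) \<mu> \<Longrightarrow> cmod \<mu> \<le> r"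
  shows "1 - real d / real w - log (real CARD('a)) r \<le> zero_error_capacity w d TYPE('a)"
proof -
  define Q where "Q = real CARD('a)"
  obtain B K where B: "B > 0"
    and growth: "\<And>n. real (card (admissible_words w d n)) \<le> B * real (n + 1) ^ K * r ^ n"
    using card_admissible_words_growth[OF w r eig] by blast
  define \<epsilon> where "\<epsilon> n = (log Q B + real K * log Q (real (n + 1)) + real d) / real n" for n
  have "\<epsilon> \<longlonglongrightarrow> 0"
  proof -
    have "ln Q > 0"
      using q by (simp add: Q_def)
    then show ?thesis
      unfolding \<epsilon>_def log_def by real_asymp
  qed
  moreover have "eventually (\<lambda>n. 1 - real d / real w - log Q r - \<epsilon> n \<le> zero_error_capacity w d TYPE('a))
                   sequentially"
    unfolding Q_def \<epsilon>_def
    by (rule eventually_sequentiallyI[of 1]) (rule zero_error_capacity_ge_rate_bound[OF w d q B r _ growth])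
  ultimately have "1 - real d / real w - log Q r - 0 \<le> zero_error_capacity w d TYPE('a)"
    by (intro tendsto_upperbound[OF tendsto_diff[OF tendsto_const] _ trivial_limit_sequentially])
  then show ?thesis
    by (simp add: Q_def)
qed

theorem corollary1:
  fixes w d :: nat
  assumes "1 \<le> w" and "d \<le> w" and "CARD('a::finite) \<ge> 2"
  shows "1 - real d / real w - h_ch (real CARD('a)) w d
           \<le> zero_error_capacity w d TYPE('a)
       \<and> zero_error_capacity w d TYPE('a) \<le> 1 - real d / real w"
proof
  show "zero_error_capacity w d TYPE('a) \<le> 1 - real d / real w"
    by (rule zero_error_capacity_le[OF assms])
next
  define \<rho> where "\<rho> = perron_eigenvalue (sw_adj w d) (sw_states w d)"
  have eig: "\<And>\<mu>. is_eigenvalue (sw_adj w d) (sw_states w d) \<mu> \<Longrightarrow> cmod \<mu> \<le> \<rho>"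
    unfolding \<rho>_def by (rule cmod_le_perron_eigenvalue[OF finite_sw_states])
  have "\<rho> \<ge> 0"
    unfolding \<rho>_def using replicate_False_in_sw_states[of w d]
    by (intro perron_eigenvalue_nonneg[OF finite_sw_states]) blast
  show "1 - real d / real w - h_ch (real CARD('a)) w d \<le> zero_error_capacity w d TYPE('a)"
  proof (cases "\<rho> = 0")
    case True
    \<comment> \<open>Here h_ch is the junk value log 0 = 0, and the bound follows from r = 1.\<close>
    have "1 - real d / real w - log (real CARD('a)) 1 \<le> zero_error_capacity w d TYPE('a)"
      using eig True by (intro zero_error_capacity_ge[OF assms]) fastforce+
    then show ?thesis
      using True by (simp add: h_ch_def \<rho>_def log_def)
  next
    case False
    then show ?thesis
      using zero_error_capacity_ge[OF assms _ eig] \<open>\<rho> \<ge> 0\<close> by (simp add: h_ch_def \<rho>_def)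
  qed
qed

end
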